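(* In the depth-3 instance with the shadow distribution described below, for $m$ sufficiently large, for every event $\mathcal E$ of the form $\{e_1\in A\}$ or $\{e_1\notin A\}$ with $e_1\in E$ and $\mathbb P[\mathcal E]>0$, and for every vertex $v$, we have $\mathbb E[|\delta^+(v)\cap A|\mid\mathcal E]\ge\Omega(1/m^4)\cdot\mathbb E[|\delta^+(v)\cap A'|\mid\mathcal E]$, where $|\delta^+(v)\cap A'|$ counts edges of $\delta^+(v)$ with their multiplicity in $A'$.
   Context: Depth-3 instance: fix a small constant $\rho>0$ and a large integer $m$ with $\rho m\in\mathbb N$, ground set $[m]$. Layers: $L_0=\{s\}$; $L_1$ has one vertex $u$ for each $S_u\subseteq[m]$ with $|S_u|=\rho m$; $L_2$ one vertex for each subset of size $2\rho m$; $L_3$ (the sinks) one vertex for each subset of size $\rho m$. Edges: $s$ to every vertex of $L_1$; $(u,v)$, $u\in L_1,v\in L_2$, iff $S_u\subseteq S_v$; $(u,v)$, $u\in L_2,v\in L_3$, iff $S_v\subseteq S_u$. For $e=(u,v)$ write $S_e=S_v$ and $e\in L_i$ if $v\in L_i$; $D(e)$ is the set of edges $(a,b)$ with $a$ reachable (possibly trivially) from the endpoint of $e$. $x_e=\binom{(1-\rho)m}{\rho m}^{-1}$ for $e\in L_1\cup L_3$ and $x_e=\binom{(1-\rho)m}{\rho m}^{-1}\binom{2\rho m}{\rho m}^{-1}$ for $e\in L_2$. Subtree solutions: for $e\in L_1$, $x^{(e)}_{e'}=1$ if $e'=e$; $\binom{2\rho m}{\rho m}^{-1}$ if $e'\in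 L_2\cap D(e)$; $\frac{\binom{(1-\rho)m}{\rho m}}{\binom{m}{\rho m}}\binom{m-2\rho m+|S_{e'}\cap S_e|}{|S_{e'}\cap S_e|}^{-1}$ if $e'\in L_3\cap D(e)$; $0$ otherwise. For $e\in L_2$: $x^{(e)}_{e'}=1$ if $e'=e$ or $e'\in L_3\cap D(e)$, else $0$. For $e\in L_3$: $x^{(e)}_{e'}=1$ iff $e'=e$. Shadow distribution: random $S$ containing each edge $e$ independently with probability $x_e$; for each $e\in S$ independently a random $S_e$ containing each edge $e'$ independently with probability $x^{(e)}_{e'}$; $A=\bigcup_{e\in S}S_e$, and $A'$ is the multiset union of the $S_e$, $e\in S$ (an edge appears in $A'$ as many times as the number of $e\in S$ with that edge in $S_e$). *)

theory Defs
  imports "HOL-Probability.Probability" "HOL-Probability.Product_PMF"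
begin

text \<open>Depth-3 instance. Parameters: m (ground set {0..<m}) and k = rho*m.
Vertices: the source Src, and Lay i S for layer i in {1,2,3} with S the attached subset.\<close>

datatype vtx = Src | Lay nat "nat set"

type_synonym edge = "vtx \<times> vtx"

definition verts :: "nat \<Rightarrow> nat \<Rightarrow> vtx set" where
  "verts m k = {Src}
     \<union> {Lay 1 S | S. S \<subseteq> {..<m} \<and> card S = k}
     \<union> {Lay 2 S | S. S \<subseteq> {..<m} \<and> card S = 2 * k}
     \<union> {Lay 3 S | S. S \<subseteq> {..<m} \<and> card S = k}"

definition edges :: "nat \<Rightarrow> nat \<Rightarrow> edge set" where
  "edges m k =
       {(Src, Lay 1 S) | S. S \<subseteq> {..<m} \<and> card S = k}
     \<union> {(Lay 1 S, Lay 2 T) | S T. S \<subseteq> {..<m} \<and> card S = k \<and> T \<subseteq> {..<m} \<and> card T = 2 * k \<and> S \<subseteq> T}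
     \<union> {(Lay 2 T, Lay 3 S) | S T. S \<subseteq> {..<m} \<and> card S = k \<and> T \<subseteq> {..<m} \<and> card T = 2 * k \<and> S \<subseteq> T}"

fun vlayer :: "vtx \<Rightarrow> nat" where
  "vlayer Src = 0" | "vlayer (Lay i S) = i"

fun vset :: "vtx \<Rightarrow> nat set" where
  "vset Src = {}" | "vset (Lay i S) = S"

definition elayer :: "edge \<Rightarrow> nat" where "elayer e = vlayer (snd e)"
definition eset :: "edge \<Rightarrow> nat set" where "eset e = vset (snd e)"

definition Desc :: "nat \<Rightarrow> nat \<Rightarrow> edge \<Rightarrow> edge set" where
  "Desc m k e = {e' \<in> edges m k. (snd e, fst e') \<in> (edges m k)\<^sup>*}"

definition outE :: "nat \<Rightarrow> nat \<Rightarrow> vtx \<Rightarrow> edge set" where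
  "outE m k v = {e \<in> edges m k. fst e = v}"

text \<open>N = binom((1-rho)m, rho m) = binom(m-k, k).\<close>
definition Nb :: "nat \<Rightarrow> nat \<Rightarrow> real" where
  "Nb m k = real ((m - k) choose k)"

definition xval :: "nat \<Rightarrow> nat \<Rightarrow> edge \<Rightarrow> real" where
  "xval m k e = (if elayer e = 2 then 1 / (Nb m k * real ((2 * k) choose k)) else 1 / Nb m k)"

definition xsub :: "nat \<Rightarrow> nat \<Rightarrow> edge \<Rightarrow> edge \<Rightarrow> real" where
  "xsub m k e e' =
    (if elayer e = 1 then
       (if e' = e then 1
        else if e' \<in> Desc m k e \<and> elayer e' = 2 then 1 / real ((2 * k) choose k)
        else if e' \<in> Desc m k e \<and> elayer e' = 3 then
          (Nb m k / real (m choose k)) /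
            real ((m - 2 * k + card (eset e' \<inter> eset e)) choose card (eset e' \<inter> eset e))
        else 0)
     else if elayer e = 2 then
       (if e' = e \<or> (e' \<in> Desc m k e \<and> elayer e' = 3) then 1 else 0)
     else (if e' = e then 1 else 0))"

definition rand_subset :: "'a set \<Rightarrow> ('a \<Rightarrow> real) \<Rightarrow> 'a set pmf" where
  "rand_subset X p = map_pmf (\<lambda>f. {x \<in> X. f x}) (Pi_pmf X False (\<lambda>x. bernoulli_pmf (p x)))"

text \<open>Shadow distribution: outcome (S, (S_e)_{e in S}); S_e = {} for e outside S (dummy).\<close>
definition shadow :: "nat \<Rightarrow> nat \<Rightarrow> (edge set \<times> (edge \<Rightarrow> edge set)) pmf" where
  "shadow m k =
     rand_subset (edges m k) (xval m k) \<bind> (\<lambda>S.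
     Pi_pmf S {} (\<lambda>e. rand_subset (edges m k) (xsub m k e)) \<bind> (\<lambda>g.
     return_pmf (S, g)))"

text \<open>A = union of the S_e, e in S;  multiplicity of e' in the multiset union A'.\<close>
definition setA :: "edge set \<times> (edge \<Rightarrow> edge set) \<Rightarrow> edge set" where
  "setA \<omega> = (\<Union>e\<in>fst \<omega>. snd \<omega> e)"

definition multA' :: "edge set \<times> (edge \<Rightarrow> edge set) \<Rightarrow> edge \<Rightarrow> nat" where
  "multA' \<omega> e' = card {e \<in> fst \<omega>. e' \<in> snd \<omega> e}"

end

theory Submission
  imports Defs
begin

(* The shadow is a family of independent random sets H_e, where H_e = S_e if e is in S and
   H_e = {} otherwise: A is their union U, and the multiplicity of an edge a in A' is the number
   of e with a in H_e.  So it suffices to bound, for every out-edge a of v, the sum over e of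
   P[a in H_e, E] by a constant times P[a in U, E].  Write mu for the sum over e of P[a in H_e].
   For independent events the reverse union bound  sum p_e <= (1 + sum p_e) P[some event occurs]
   holds.  On E = {e1 not in U} the H_e stay independent after conditioning, and each probability
   at most doubles because P[e1 in H_e] <= x_e <= 1/2; this gives the constant 1 + 2 mu.
   On E = {e1 in U} one separates whether e1 lies in the same H_e as a, and uses that the events
   a notin H_e and e1 notin H_e are positively correlated; this gives 2 + 2 mu.  Finally mu <= 2,
   since every edge has at most binom(2k,k) ancestors in each of the layers 1 and 2.  The result
   is the bound with constant 1/6 for all m, k with 1 <= k and 2k < m, without the factor m^-4. *)

section \<open>Discrete probability\<close>

lemma one_plus_sum_mult_prod_one_minus_le_1:
  fixes t :: "'i \<Rightarrow> real"
  assumes "finite I" "\<And>i. i \<in> I \<Longrightarrow> 0 \<le> t i \<and> t i \<le> 1"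
  shows "(1 + sum t I) * (\<Prod>i\<in>I. 1 - t i) \<le> 1"
  using assms
proof (induction I rule: finite_induct)
  case empty
  then show ?case by simp
next
  case (insert x F)
  have IH: "(1 + sum t F) * (\<Prod>i\<in>F. 1 - t i) \<le> 1" and tx: "0 \<le> t x" "t x \<le> 1"
    using insert by auto
  have "0 \<le> sum t F" "0 \<le> (\<Prod>i\<in>F. 1 - t i)"
    using insert by (auto intro: sum_nonneg prod_nonneg)
  moreover have "(1 + (t x + sum t F)) * (1 - t x) \<le> 1 + sum t F"
    using tx \<open>0 \<le> sum t F\<close> by (simp add: algebra_simps)
  ultimately have "(1 + (t x + sum t F)) * (1 - t x) * (\<Prod>i\<in>F. 1 - t i) \<le> (1 + sum t F) * (\<Prod>i\<in>F. 1 - t i)"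
    by (intro mult_right_mono)
  then show ?case using insert IH by (simp add: mult.assoc)
qed

lemma sum_le_one_plus_sum_mult_one_minus_prod:
  fixes t :: "'i \<Rightarrow> real"
  assumes "finite I" "\<And>i. i \<in> I \<Longrightarrow> 0 \<le> t i \<and> t i \<le> 1"
  shows "sum t I \<le> (1 + sum t I) * (1 - (\<Prod>i\<in>I. 1 - t i))"
  using one_plus_sum_mult_prod_one_minus_le_1[OF assms] by (simp add: algebra_simps)

lemma prob_bernoulli_bind:
  assumes "0 \<le> p" "p \<le> 1"
  shows "measure_pmf.prob (bernoulli_pmf p \<bind> K) A
       = p * measure_pmf.prob (K True) A + (1 - p) * measure_pmf.prob (K False) A"
proof -
  have "emeasure (measure_pmf (bernoulli_pmf p \<bind> K)) A = emeasure (K True) A * p + emeasure (K False) A * (1 - p)"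
    using assms by simp
  then show ?thesis
    using assms by (simp add: measure_pmf.emeasure_eq_measure mult.commute flip: ennreal_mult ennreal_plus)
qed

lemma expectation_card_Int:
  assumes "finite Y"
  shows "measure_pmf.expectation p (\<lambda>x. real (card (Y \<inter> A x))) = (\<Sum>a\<in>Y. measure_pmf.prob p {x. a \<in> A x})"
proof -
  have "real (card (Y \<inter> A x)) = (\<Sum>a\<in>Y. indicator {x. a \<in> A x} x)" for x
    using assms by (simp add: indicator_def sum.If_cases Int_def)
  then show ?thesis
    using assms by (simp add: Bochner_Integration.integral_sum measure_pmf.emeasure_eq_measure)
qed

lemma measure_cond_pmf:
  assumes "set_pmf p \<inter> s \<noteq> {}"
  shows "measure_pmf.prob (cond_pmf p s) A = measure_pmf.prob p (s \<inter> A) / measure_pmf.prob p s"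
  using assms by (simp add: cond_pmf.rep_eq measure_pmf.emeasure_eq_measure measure_pmf_zero_iff)

lemma prob_compl_pmf: "measure_pmf.prob p (UNIV - A) = 1 - measure_pmf.prob p A"
  using measure_pmf.prob_compl[of A p] by simp

lemma prob_Diff_pmf: "B \<subseteq> A \<Longrightarrow> measure_pmf.prob p (A - B) = measure_pmf.prob p A - measure_pmf.prob p B"
  by (rule measure_pmf.finite_measure_Diff) auto

lemma prob_split_pmf:
  "measure_pmf.prob p {x. P x} = measure_pmf.prob p {x. P x \<and> Q x} + measure_pmf.prob p {x. P x \<and> \<not> Q x}"
proof -
  have "measure_pmf.prob p {x. P x} = measure_pmf.prob p ({x. P x \<and> Q x} \<union> {x. P x \<and> \<not> Q x})"
    by (rule arg_cong[where f = "measure_pmf.prob p"]) auto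
  also have "\<dots> = measure_pmf.prob p {x. P x \<and> Q x} + measure_pmf.prob p {x. P x \<and> \<not> Q x}"
    by (rule measure_pmf.finite_measure_Union) auto
  finally show ?thesis .
qed

lemma expectation_cond_pmf_map_pmf_eq:
  fixes \<phi> :: "'c \<Rightarrow> real"
  assumes eq: "map_pmf f p = map_pmf g q" and pos: "measure_pmf.prob p (f -` A) \<noteq> 0"
  shows "measure_pmf.prob q (g -` A) \<noteq> 0"
    and "measure_pmf.expectation (cond_pmf p (f -` A)) (\<lambda>x. \<phi> (f x))
       = measure_pmf.expectation (cond_pmf q (g -` A)) (\<lambda>x. \<phi> (g x))"
proof -
  have prob_eq: "measure_pmf.prob p (f -` A) = measure_pmf.prob q (g -` A)"
    using arg_cong[OF eq, of "\<lambda>r. measure_pmf.prob r A"] by simp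
  with pos show "measure_pmf.prob q (g -` A) \<noteq> 0" by simp
  have "set_pmf p \<inter> f -` A \<noteq> {}" "set_pmf q \<inter> g -` A \<noteq> {}"
    using pos prob_eq by (simp_all add: measure_pmf_zero_iff[symmetric])
  then have "map_pmf f (cond_pmf p (f -` A)) = map_pmf g (cond_pmf q (g -` A))"
    using eq by (simp flip: cond_map_pmf)
  from arg_cong[OF this, of "\<lambda>r. measure_pmf.expectation r \<phi>"]
  show "measure_pmf.expectation (cond_pmf p (f -` A)) (\<lambda>x. \<phi> (f x))
      = measure_pmf.expectation (cond_pmf q (g -` A)) (\<lambda>x. \<phi> (g x))"
    by simp
qed

section \<open>Independent random sets\<close>

locale independent_random_sets =
  fixes X :: "'i set" and D :: "'i \<Rightarrow> 'a set pmf"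
  assumes finite_index: "finite X"
begin

abbreviation family :: "('i \<Rightarrow> 'a set) pmf" where
  "family \<equiv> Pi_pmf X {} D"

lemma prob_family_Pi:
  "measure_pmf.prob family {H. \<forall>j\<in>X. H j \<in> B j} = (\<Prod>j\<in>X. measure_pmf.prob (D j) (B j))"
proof -
  have "{H. \<forall>j\<in>X. H j \<in> B j} = Pi X B" by (auto simp: Pi_def)
  then show ?thesis using measure_Pi_pmf_Pi[OF finite_index, of "{}" D B] by simp
qed

lemma prob_family_component_Pi:
  assumes "i \<in> X"
  shows "measure_pmf.prob family {H. H i \<in> C \<and> (\<forall>j\<in>X-{i}. H j \<in> B j)}
       = measure_pmf.prob (D i) C * (\<Prod>j\<in>X-{i}. measure_pmf.prob (D j) (B j))"
proof -
  have "{H. H i \<in> C \<and> (\<forall>j\<in>X-{i}. H j \<in> B j)} = {H. \<forall>j\<in>X. H j \<in> (if j = i then C else B j)}"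
    using assms by auto
  also have "measure_pmf.prob family \<dots> = (\<Prod>j\<in>X. measure_pmf.prob (D j) (if j = i then C else B j))"
    by (rule prob_family_Pi)
  also have "\<dots> = measure_pmf.prob (D i) C * (\<Prod>j\<in>X-{i}. measure_pmf.prob (D j) (if j = i then C else B j))"
    using assms finite_index by (simp add: prod.remove)
  also have "(\<Prod>j\<in>X-{i}. measure_pmf.prob (D j) (if j = i then C else B j)) = (\<Prod>j\<in>X-{i}. measure_pmf.prob (D j) (B j))"
    by (intro prod.cong) auto
  finally show ?thesis .
qed

lemma prob_family_ex:
  "measure_pmf.prob family {H. \<exists>j\<in>X. H j \<in> A j} = 1 - (\<Prod>j\<in>X. 1 - measure_pmf.prob (D j) (A j))"
proof -
  have "{H. \<exists>j\<in>X. H j \<in> A j} = UNIV - {H. \<forall>j\<in>X. H j \<in> UNIV - A j}" by auto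
  then show ?thesis
    by (simp only: prob_compl_pmf prob_family_Pi)
qed

lemma reverse_union_bound:
  "(\<Sum>j\<in>X. measure_pmf.prob (D j) (A j))
     \<le> (1 + (\<Sum>j\<in>X. measure_pmf.prob (D j) (A j))) * measure_pmf.prob family {H. \<exists>j\<in>X. H j \<in> A j}"
  unfolding prob_family_ex
  by (rule sum_le_one_plus_sum_mult_one_minus_prod[OF finite_index]) auto

lemma prob_mem_and_not_mem_Union:
  assumes "i \<in> X"
  shows "measure_pmf.prob family {H. e \<in> H i \<and> e' \<notin> (\<Union>j\<in>X. H j)}
       = measure_pmf.prob (D i) {T. e \<in> T \<and> e' \<notin> T} * (\<Prod>j\<in>X-{i}. measure_pmf.prob (D j) {T. e' \<notin> T})"
proof -
  have "{H. e \<in> H i \<and> e' \<notin> (\<Union>j\<in>X. H j)}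
      = {H. H i \<in> {T. e \<in> T \<and> e' \<notin> T} \<and> (\<forall>j\<in>X-{i}. H j \<in> {T. e' \<notin> T})}"
    using assms by auto
  then show ?thesis by (simp only: prob_family_component_Pi[OF assms])
qed

lemma prob_Union_mem_not_mem:
  "measure_pmf.prob family {H. e \<in> (\<Union>j\<in>X. H j) \<and> e' \<notin> (\<Union>j\<in>X. H j)}
     = (\<Prod>j\<in>X. measure_pmf.prob (D j) {T. e' \<notin> T}) - (\<Prod>j\<in>X. measure_pmf.prob (D j) {T. e \<notin> T \<and> e' \<notin> T})"
proof -
  have "{H. e \<in> (\<Union>j\<in>X. H j) \<and> e' \<notin> (\<Union>j\<in>X. H j)}
      = {H. \<forall>j\<in>X. H j \<in> {T. e' \<notin> T}} - {H. \<forall>j\<in>X. H j \<in> {T. e \<notin> T \<and> e' \<notin> T}}"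
    by auto
  also have "measure_pmf.prob family \<dots>
      = measure_pmf.prob family {H. \<forall>j\<in>X. H j \<in> {T. e' \<notin> T}}
        - measure_pmf.prob family {H. \<forall>j\<in>X. H j \<in> {T. e \<notin> T \<and> e' \<notin> T}}"
    by (rule prob_Diff_pmf) auto
  finally show ?thesis by (simp only: prob_family_Pi)
qed

(* Conditioned on e' notin U the sets H i stay independent, and t i is the conditional
   probability of e in H i. *)
lemma prob_mem_not_mem_Union_eq:
  fixes e e' :: 'a
  assumes pos: "\<And>i. i \<in> X \<Longrightarrow> 0 < measure_pmf.prob (D i) {T. e' \<notin> T}"
  defines "a \<equiv> \<lambda>i. measure_pmf.prob (D i) {T. e' \<notin> T}"
    and "t \<equiv> \<lambda>i. measure_pmf.prob (D i) {T. e \<in> T \<and> e' \<notin> T} / measure_pmf.prob (D i) {T. e' \<notin> T}"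
  shows "(\<Sum>i\<in>X. measure_pmf.prob family {H. e \<in> H i \<and> e' \<notin> (\<Union>j\<in>X. H j)}) = prod a X * sum t X"
    and "measure_pmf.prob family {H. e \<in> (\<Union>j\<in>X. H j) \<and> e' \<notin> (\<Union>j\<in>X. H j)}
       = prod a X * (1 - (\<Prod>i\<in>X. 1 - t i))"
proof -
  have "measure_pmf.prob family {H. e \<in> H i \<and> e' \<notin> (\<Union>j\<in>X. H j)} = prod a X * t i" if i: "i \<in> X" for i
    using prob_mem_and_not_mem_Union[OF i, of e e'] prod.remove[OF finite_index i, of a] pos[OF i]
    unfolding a_def t_def by simp
  then show "(\<Sum>i\<in>X. measure_pmf.prob family {H. e \<in> H i \<and> e' \<notin> (\<Union>j\<in>X. H j)}) = prod a X * sum t X"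
    by (simp add: sum_distrib_left)
  have "a i * (1 - t i) = measure_pmf.prob (D i) {T. e \<notin> T \<and> e' \<notin> T}" if "i \<in> X" for i
    using prob_split_pmf[of "D i" "\<lambda>T. e' \<notin> T" "\<lambda>T. e \<in> T"] pos[OF that]
    unfolding a_def t_def by (simp add: right_diff_distrib conj_commute)
  then have "prod a X * (\<Prod>i\<in>X. 1 - t i) = (\<Prod>i\<in>X. measure_pmf.prob (D i) {T. e \<notin> T \<and> e' \<notin> T})"
    by (simp add: prod.distrib[symmetric])
  then show "measure_pmf.prob family {H. e \<in> (\<Union>j\<in>X. H j) \<and> e' \<notin> (\<Union>j\<in>X. H j)}
      = prod a X * (1 - (\<Prod>i\<in>X. 1 - t i))"
    unfolding prob_Union_mem_not_mem a_def by (simp add: right_diff_distrib)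
qed

lemma sum_prob_mem_not_mem_Union_le:
  assumes half: "\<And>i. i \<in> X \<Longrightarrow> measure_pmf.prob (D i) {T. e' \<in> T} \<le> 1/2"
    and mu: "(\<Sum>i\<in>X. measure_pmf.prob (D i) {T. e \<in> T}) \<le> \<mu>"
  shows "(\<Sum>i\<in>X. measure_pmf.prob family {H. e \<in> H i \<and> e' \<notin> (\<Union>j\<in>X. H j)})
     \<le> (1 + 2 * \<mu>) * measure_pmf.prob family {H. e \<in> (\<Union>j\<in>X. H j) \<and> e' \<notin> (\<Union>j\<in>X. H j)}"
proof -
  define a where "a = (\<lambda>i. measure_pmf.prob (D i) {T. e' \<notin> T})"
  define t where "t = (\<lambda>i. measure_pmf.prob (D i) {T. e \<in> T \<and> e' \<notin> T} / measure_pmf.prob (D i) {T. e' \<notin> T})"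
  have a_ge: "1/2 \<le> a i" if "i \<in> X" for i
    using half[OF that] prob_compl_pmf[of "D i" "{T. e' \<in> T}"] unfolding a_def by (simp add: set_diff_eq)
  have pos: "0 < a i" if "i \<in> X" for i using a_ge[OF that] by simp
  have lhs: "(\<Sum>i\<in>X. measure_pmf.prob family {H. e \<in> H i \<and> e' \<notin> (\<Union>j\<in>X. H j)}) = prod a X * sum t X"
    unfolding a_def t_def by (rule prob_mem_not_mem_Union_eq(1)) (use pos in \<open>simp add: a_def\<close>)
  have rhs: "measure_pmf.prob family {H. e \<in> (\<Union>j\<in>X. H j) \<and> e' \<notin> (\<Union>j\<in>X. H j)}
      = prod a X * (1 - (\<Prod>i\<in>X. 1 - t i))"
    unfolding a_def t_def by (rule prob_mem_not_mem_Union_eq(2)) (use pos in \<open>simp add: a_def\<close>)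
  have t01: "0 \<le> t i \<and> t i \<le> 1" if "i \<in> X" for i
    using a_ge[OF that, unfolded a_def]
      measure_pmf.finite_measure_mono[of "{T. e \<in> T \<and> e' \<notin> T}" "{T. e' \<notin> T}" "D i"]
    unfolding t_def by auto
  have "t i \<le> 2 * measure_pmf.prob (D i) {T. e \<in> T}" if "i \<in> X" for i
  proof -
    have "t i \<le> measure_pmf.prob (D i) {T. e \<in> T \<and> e' \<notin> T} / (1/2)"
      unfolding t_def using a_ge[OF that, unfolded a_def] by (intro divide_left_mono) auto
    also have "\<dots> \<le> 2 * measure_pmf.prob (D i) {T. e \<in> T}"
      using measure_pmf.finite_measure_mono[of "{T. e \<in> T \<and> e' \<notin> T}" "{T. e \<in> T}" "D i"] by auto
    finally show ?thesis .
  qed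
  then have "sum t X \<le> (\<Sum>i\<in>X. 2 * measure_pmf.prob (D i) {T. e \<in> T})"
    by (rule sum_mono)
  also have "\<dots> \<le> 2 * \<mu>" using mu by (simp add: sum_distrib_left[symmetric])
  finally have "sum t X \<le> 2 * \<mu>" .
  have "prod a X * sum t X \<le> prod a X * ((1 + sum t X) * (1 - (\<Prod>i\<in>X. 1 - t i)))"
    using sum_le_one_plus_sum_mult_one_minus_prod[of X t] finite_index t01
    by (intro mult_left_mono prod_nonneg) (auto simp: a_def)
  also have "\<dots> \<le> prod a X * ((1 + 2 * \<mu>) * (1 - (\<Prod>i\<in>X. 1 - t i)))"
    using \<open>sum t X \<le> 2 * \<mu>\<close> t01
    by (intro mult_left_mono mult_right_mono prod_nonneg) (auto simp: prod_le_1 a_def)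
  finally show ?thesis
    unfolding lhs rhs by (simp add: ac_simps)
qed

lemma prob_family_component:
  assumes "i \<in> X"
  shows "measure_pmf.prob family {H. H i \<in> C} = measure_pmf.prob (D i) C"
proof -
  have "measure_pmf.prob family {H. H i \<in> C} = measure_pmf.prob (map_pmf (\<lambda>H. H i) family) C"
    by (simp add: vimage_def)
  also have "map_pmf (\<lambda>H. H i) family = D i"
    using Pi_pmf_component[OF finite_index, of i "{}" D] assms by simp
  finally show ?thesis .
qed

lemma prob_mem_Union:
  "measure_pmf.prob family {H. e \<in> (\<Union>j\<in>X. H j)} = 1 - (\<Prod>j\<in>X. measure_pmf.prob (D j) {T. e \<notin> T})"
proof -
  have "{H. e \<in> (\<Union>j\<in>X. H j)} = UNIV - {H. \<forall>j\<in>X. H j \<in> {T. e \<notin> T}}" by auto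
  then show ?thesis by (simp only: prob_compl_pmf prob_family_Pi)
qed

lemma prob_mem_Union_mult_le:
  assumes corr: "\<And>i. i \<in> X \<Longrightarrow> measure_pmf.prob (D i) {T. e \<notin> T} * measure_pmf.prob (D i) {T. e' \<notin> T}
                                  \<le> measure_pmf.prob (D i) {T. e \<notin> T \<and> e' \<notin> T}"
  shows "measure_pmf.prob family {H. e \<in> (\<Union>j\<in>X. H j)} * measure_pmf.prob family {H. e' \<in> (\<Union>j\<in>X. H j)}
       \<le> measure_pmf.prob family {H. e \<in> (\<Union>j\<in>X. H j) \<and> e' \<in> (\<Union>j\<in>X. H j)}"
proof -
  define b where "b = (\<Prod>j\<in>X. measure_pmf.prob (D j) {T. e \<notin> T})"
  define a where "a = (\<Prod>j\<in>X. measure_pmf.prob (D j) {T. e' \<notin> T})"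
  have le: "b * a \<le> (\<Prod>j\<in>X. measure_pmf.prob (D j) {T. e \<notin> T \<and> e' \<notin> T})"
    unfolding a_def b_def prod.distrib[symmetric] using corr by (intro prod_mono) auto
  have "{H. e \<in> (\<Union>j\<in>X. H j) \<and> e' \<in> (\<Union>j\<in>X. H j)}
      = {H. e \<in> (\<Union>j\<in>X. H j)} - {H. e \<in> (\<Union>j\<in>X. H j) \<and> e' \<notin> (\<Union>j\<in>X. H j)}"
    by auto
  then have diff: "measure_pmf.prob family {H. e \<in> (\<Union>j\<in>X. H j) \<and> e' \<in> (\<Union>j\<in>X. H j)}
      = measure_pmf.prob family {H. e \<in> (\<Union>j\<in>X. H j)}
        - measure_pmf.prob family {H. e \<in> (\<Union>j\<in>X. H j) \<and> e' \<notin> (\<Union>j\<in>X. H j)}"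
    by (simp only:) (rule prob_Diff_pmf, auto)
  show ?thesis
    using le diff unfolding prob_mem_Union prob_Union_mem_not_mem a_def[symmetric] b_def[symmetric]
    by (simp add: algebra_simps)
qed

lemma prob_mem_component_mem_Union_le:
  assumes i: "i \<in> X"
  shows "measure_pmf.prob family {H. e \<in> H i \<and> e' \<in> (\<Union>j\<in>X. H j)}
       \<le> measure_pmf.prob (D i) {T. e \<in> T \<and> e' \<in> T}
         + measure_pmf.prob (D i) {T. e \<in> T} * measure_pmf.prob family {H. e' \<in> (\<Union>j\<in>X. H j)}"
proof -
  define a where "a j = measure_pmf.prob (D j) {T. e' \<notin> T}" for j
  define s where "s = measure_pmf.prob (D i) {T. e \<in> T \<and> e' \<notin> T}"
  define r where "r = measure_pmf.prob (D i) {T. e \<in> T \<and> e' \<in> T}"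
  define p where "p = measure_pmf.prob (D i) {T. e \<in> T}"
  have p_eq: "p = r + s"
    using prob_split_pmf[of "D i" "\<lambda>T. e \<in> T" "\<lambda>T. e' \<in> T"] unfolding p_def r_def s_def by simp
  have a01: "0 \<le> a j" "a j \<le> 1" for j unfolding a_def by auto
  have "{H. e \<in> H i \<and> e' \<in> (\<Union>j\<in>X. H j)}
      = {H. H i \<in> {T. e \<in> T}} - {H. e \<in> H i \<and> e' \<notin> (\<Union>j\<in>X. H j)}"
    by auto
  then have "measure_pmf.prob family {H. e \<in> H i \<and> e' \<in> (\<Union>j\<in>X. H j)}
      = measure_pmf.prob family {H. H i \<in> {T. e \<in> T}} - measure_pmf.prob family {H. e \<in> H i \<and> e' \<notin> (\<Union>j\<in>X. H j)}"
    by (simp only:) (rule prob_Diff_pmf, auto)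
  also have "\<dots> = r + s * (1 - prod a (X - {i}))"
    unfolding prob_family_component[OF i] prob_mem_and_not_mem_Union[OF i] p_def[symmetric] s_def[symmetric] a_def p_eq
    by (simp add: algebra_simps)
  also have "\<dots> \<le> r + p * (1 - prod a X)"
  proof -
    have "prod a X \<le> prod a (X - {i})"
      using prod.remove[OF finite_index i, of a] a01 by (simp add: mult_left_le_one_le prod_nonneg)
    then show ?thesis
      using p_eq a01 by (simp add: mult_mono r_def s_def prod_le_1)
  qed
  finally show ?thesis
    unfolding prob_mem_Union p_def r_def a_def .
qed

(* Split according to whether e' lies in the same set H i as e or in another one. *)
lemma sum_prob_mem_mem_Union_le:
  assumes corr: "\<And>i. i \<in> X \<Longrightarrow> measure_pmf.prob (D i) {T. e \<notin> T} * measure_pmf.prob (D i) {T. e' \<notin> T}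
                                  \<le> measure_pmf.prob (D i) {T. e \<notin> T \<and> e' \<notin> T}"
    and mu: "(\<Sum>i\<in>X. measure_pmf.prob (D i) {T. e \<in> T}) \<le> \<mu>"
  shows "(\<Sum>i\<in>X. measure_pmf.prob family {H. e \<in> H i \<and> e' \<in> (\<Union>j\<in>X. H j)})
     \<le> (2 + 2 * \<mu>) * measure_pmf.prob family {H. e \<in> (\<Union>j\<in>X. H j) \<and> e' \<in> (\<Union>j\<in>X. H j)}"
proof -
  define r where "r i = measure_pmf.prob (D i) {T. e \<in> T \<and> e' \<in> T}" for i
  define p where "p i = measure_pmf.prob (D i) {T. e \<in> T}" for i
  define q where "q = measure_pmf.prob family {H. e' \<in> (\<Union>j\<in>X. H j)}"
  define R where "R = measure_pmf.prob family {H. e \<in> (\<Union>j\<in>X. H j) \<and> e' \<in> (\<Union>j\<in>X. H j)}"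
  have "0 \<le> \<mu>" using mu sum_nonneg[of X p] unfolding p_def by simp
  have r_le_p: "sum r X \<le> sum p X"
    unfolding r_def p_def by (intro sum_mono measure_pmf.finite_measure_mono) auto
  have "sum r X \<le> (1 + sum r X) * measure_pmf.prob family {H. \<exists>j\<in>X. H j \<in> {T. e \<in> T \<and> e' \<in> T}}"
    unfolding r_def by (rule reverse_union_bound)
  also have "\<dots> \<le> (1 + \<mu>) * R"
    unfolding R_def using r_le_p mu sum_nonneg[of X p]
    by (intro mult_mono measure_pmf.finite_measure_mono) (auto simp: p_def r_def)
  finally have r_bound: "sum r X \<le> (1 + \<mu>) * R" .
  have "sum p X * q \<le> ((1 + sum p X) * measure_pmf.prob family {H. \<exists>j\<in>X. H j \<in> {T. e \<in> T}}) * q"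
    unfolding p_def by (intro mult_right_mono reverse_union_bound) (simp add: q_def)
  also have "\<dots> = (1 + sum p X) * (measure_pmf.prob family {H. e \<in> (\<Union>j\<in>X. H j)} * q)"
    by (simp add: Bex_def)
  also have "\<dots> \<le> (1 + \<mu>) * R"
    unfolding q_def R_def using prob_mem_Union_mult_le[OF corr] mu \<open>0 \<le> \<mu>\<close>
    by (intro mult_mono) (auto simp: p_def sum_nonneg)
  finally have p_bound: "sum p X * q \<le> (1 + \<mu>) * R" .
  have "(\<Sum>i\<in>X. measure_pmf.prob family {H. e \<in> H i \<and> e' \<in> (\<Union>j\<in>X. H j)}) \<le> (\<Sum>i\<in>X. r i + p i * q)"
    unfolding r_def p_def q_def by (intro sum_mono prob_mem_component_mem_Union_le)
  also have "\<dots> = sum r X + sum p X * q" by (simp add: sum.distrib sum_distrib_right)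
  also have "\<dots> \<le> (1 + \<mu>) * R + (1 + \<mu>) * R" using r_bound p_bound by linarith
  also have "\<dots> = (2 + 2 * \<mu>) * R" by (simp add: algebra_simps)
  finally show ?thesis unfolding R_def .
qed

lemma sum_prob_mem_le:
  assumes half: "\<And>i. i \<in> X \<Longrightarrow> measure_pmf.prob (D i) {T. e' \<in> T} \<le> 1/2"
    and corr: "\<And>i. i \<in> X \<Longrightarrow> measure_pmf.prob (D i) {T. e \<notin> T} * measure_pmf.prob (D i) {T. e' \<notin> T}
                                  \<le> measure_pmf.prob (D i) {T. e \<notin> T \<and> e' \<notin> T}"
    and mu: "(\<Sum>i\<in>X. measure_pmf.prob (D i) {T. e \<in> T}) \<le> \<mu>"
  shows "(\<Sum>i\<in>X. measure_pmf.prob family {H. e \<in> H i \<and> (e' \<in> (\<Union>j\<in>X. H j)) = b})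
     \<le> (2 + 2 * \<mu>) * measure_pmf.prob family {H. e \<in> (\<Union>j\<in>X. H j) \<and> (e' \<in> (\<Union>j\<in>X. H j)) = b}"
proof (cases b)
  case True
  then show ?thesis using sum_prob_mem_mem_Union_le[OF corr mu] by simp
next
  case False
  have "0 \<le> \<mu>" using mu sum_nonneg[of X "\<lambda>i. measure_pmf.prob (D i) {T. e \<in> T}"] by simp
  then have "(1 + 2 * \<mu>) * measure_pmf.prob family {H. e \<in> (\<Union>j\<in>X. H j) \<and> e' \<notin> (\<Union>j\<in>X. H j)}
      \<le> (2 + 2 * \<mu>) * measure_pmf.prob family {H. e \<in> (\<Union>j\<in>X. H j) \<and> e' \<notin> (\<Union>j\<in>X. H j)}"
    by (intro mult_right_mono) auto
  with False show ?thesis using sum_prob_mem_not_mem_Union_le[OF half mu] by simp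
qed

lemma expectation_multiplicity_le:
  assumes "finite Y"
    and half: "\<And>i. i \<in> X \<Longrightarrow> measure_pmf.prob (D i) {T. e' \<in> T} \<le> 1/2"
    and corr: "\<And>i e. i \<in> X \<Longrightarrow> e \<in> Y \<Longrightarrow>
                 measure_pmf.prob (D i) {T. e \<notin> T} * measure_pmf.prob (D i) {T. e' \<notin> T}
                 \<le> measure_pmf.prob (D i) {T. e \<notin> T \<and> e' \<notin> T}"
    and mu: "\<And>e. e \<in> Y \<Longrightarrow> (\<Sum>i\<in>X. measure_pmf.prob (D i) {T. e \<in> T}) \<le> \<mu>"
    and pos: "measure_pmf.prob family {H. (e' \<in> (\<Union>j\<in>X. H j)) = b} \<noteq> 0"
  shows "measure_pmf.expectation (cond_pmf family {H. (e' \<in> (\<Union>j\<in>X. H j)) = b})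
           (\<lambda>H. \<Sum>e\<in>Y. real (card {i\<in>X. e \<in> H i}))
       \<le> (2 + 2 * \<mu>) * measure_pmf.expectation (cond_pmf family {H. (e' \<in> (\<Union>j\<in>X. H j)) = b})
           (\<lambda>H. real (card (Y \<inter> (\<Union>j\<in>X. H j))))"
proof -
  define E where "E = {H. (e' \<in> (\<Union>j\<in>X. H j)) = b}"
  have ne: "set_pmf family \<inter> E \<noteq> {}"
    using pos measure_pmf_zero_iff[of family E] unfolding E_def by blast
  have "(\<Sum>e\<in>Y. real (card {i\<in>X. e \<in> H i})) = real (card ((Y \<times> X) \<inter> {(e, i). e \<in> H i}))" for H
  proof -
    have "(Y \<times> X) \<inter> {(e, i). e \<in> H i} = (SIGMA e:Y. {i\<in>X. e \<in> H i})" by auto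
    then show ?thesis using \<open>finite Y\<close> finite_index by simp
  qed
  then have "measure_pmf.expectation (cond_pmf family E) (\<lambda>H. \<Sum>e\<in>Y. real (card {i\<in>X. e \<in> H i}))
      = (\<Sum>e\<in>Y. \<Sum>i\<in>X. measure_pmf.prob (cond_pmf family E) {H. e \<in> H i})"
    using \<open>finite Y\<close> finite_index by (simp add: expectation_card_Int sum.cartesian_product case_prod_unfold)
  also have "\<dots> = (\<Sum>e\<in>Y. (\<Sum>i\<in>X. measure_pmf.prob family {H. e \<in> H i \<and> (e' \<in> (\<Union>j\<in>X. H j)) = b})
                         / measure_pmf.prob family E)"
    unfolding measure_cond_pmf[OF ne] by (simp add: E_def sum_divide_distrib Collect_conj_eq Int_commute)
  also have "\<dots> \<le> (\<Sum>e\<in>Y. (2 + 2 * \<mu>) * measure_pmf.prob family {H. e \<in> (\<Union>j\<in>X. H j) \<and> (e' \<in> (\<Union>j\<in>X. H j)) = b}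
                         / measure_pmf.prob family E)"
    using sum_prob_mem_le[OF half corr mu] by (intro sum_mono divide_right_mono) auto
  also have "\<dots> = (2 + 2 * \<mu>) * measure_pmf.expectation (cond_pmf family E) (\<lambda>H. real (card (Y \<inter> (\<Union>j\<in>X. H j))))"
    unfolding expectation_card_Int[OF \<open>finite Y\<close>] measure_cond_pmf[OF ne]
    by (simp add: E_def sum_distrib_left Collect_conj_eq Int_commute)
  finally show ?thesis unfolding E_def .
qed

end

section \<open>Bernoulli random subsets\<close>

lemma prob_rand_subset_avoids:
  assumes "finite X" "F \<subseteq> X" "\<And>j. j \<in> F \<Longrightarrow> 0 \<le> q j \<and> q j \<le> 1"
  shows "measure_pmf.prob (rand_subset X q) {T. \<forall>j\<in>F. j \<notin> T} = (\<Prod>j\<in>F. 1 - q j)"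
proof -
  have "(\<lambda>f. {x\<in>X. f x}) -` {T. \<forall>j\<in>F. j \<notin> T} = Pi X (\<lambda>j. if j \<in> F then {False} else UNIV)"
    using assms(2) by (auto simp: Pi_def)
  then have "measure_pmf.prob (rand_subset X q) {T. \<forall>j\<in>F. j \<notin> T}
      = (\<Prod>j\<in>X. measure_pmf.prob (bernoulli_pmf (q j)) (if j \<in> F then {False} else UNIV))"
    unfolding rand_subset_def using measure_Pi_pmf_Pi[OF assms(1)] by simp
  also have "\<dots> = (\<Prod>j\<in>X. if j \<in> F then 1 - q j else 1)"
    using assms(3) by (intro prod.cong) (auto simp: measure_pmf_single)
  also have "\<dots> = (\<Prod>j\<in>{j\<in>X. j \<in> F}. 1 - q j)"
    by (rule prod.inter_filter[symmetric, OF assms(1)])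
  also have "{j\<in>X. j \<in> F} = F" using assms(2) by auto
  finally show ?thesis .
qed

lemma prob_rand_subset_not_mem:
  assumes "finite X" "e \<in> X" "0 \<le> q e" "q e \<le> 1"
  shows "measure_pmf.prob (rand_subset X q) {T. e \<notin> T} = 1 - q e"
  using prob_rand_subset_avoids[of X "{e}" q] assms by simp

lemma prob_rand_subset_mem:
  assumes "finite X" "e \<in> X" "0 \<le> q e" "q e \<le> 1"
  shows "measure_pmf.prob (rand_subset X q) {T. e \<in> T} = q e"
proof -
  have "{T. e \<in> T} = UNIV - {T. e \<notin> T}" by auto
  then show ?thesis using prob_rand_subset_not_mem[of X e q] assms by (simp add: prob_compl_pmf)
qed

lemma prob_rand_subset_not_mem_mult_le:
  assumes "finite X" "e \<in> X" "e' \<in> X" "\<And>j. j \<in> X \<Longrightarrow> 0 \<le> q j \<and> q j \<le> 1"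
  shows "measure_pmf.prob (rand_subset X q) {T. e \<notin> T} * measure_pmf.prob (rand_subset X q) {T. e' \<notin> T}
       \<le> measure_pmf.prob (rand_subset X q) {T. e \<notin> T \<and> e' \<notin> T}"
proof (cases "e = e'")
  case True
  then show ?thesis by (simp add: mult_left_le_one_le)
next
  case False
  have "measure_pmf.prob (rand_subset X q) {T. \<forall>j\<in>{e, e'}. j \<notin> T} = (\<Prod>j\<in>{e, e'}. 1 - q j)"
    by (rule prob_rand_subset_avoids) (use assms in auto)
  then have "measure_pmf.prob (rand_subset X q) {T. e \<notin> T \<and> e' \<notin> T} = (1 - q e) * (1 - q e')"
    using False by simp
  then show ?thesis using assms by (simp add: prob_rand_subset_not_mem)
qed

lemma thinned_not_mem_mult_le:
  assumes "0 \<le> p" "p \<le> 1"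
    and corr: "measure_pmf.prob R {T. e \<notin> T} * measure_pmf.prob R {T. e' \<notin> T}
               \<le> measure_pmf.prob R {T. e \<notin> T \<and> e' \<notin> T}"
  defines "D \<equiv> bernoulli_pmf p \<bind> (\<lambda>b. if b then R else return_pmf {})"
  shows "measure_pmf.prob D {T. e \<notin> T} * measure_pmf.prob D {T. e' \<notin> T}
       \<le> measure_pmf.prob D {T. e \<notin> T \<and> e' \<notin> T}"
proof -
  define u where "u = measure_pmf.prob R {T. e \<notin> T}"
  define v where "v = measure_pmf.prob R {T. e' \<notin> T}"
  define w where "w = measure_pmf.prob R {T. e \<notin> T \<and> e' \<notin> T}"
  have D: "measure_pmf.prob D A = p * measure_pmf.prob R A + (1 - p) * indicator A {}" for A
    unfolding D_def using prob_bernoulli_bind[OF assms(1,2), of "\<lambda>b. if b then R else return_pmf {}" A] by simp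
  have "(p * w + (1 - p)) - (p * u + (1 - p)) * (p * v + (1 - p))
      = p * (w - u * v) + p * (1 - p) * ((1 - u) * (1 - v))"
    by (simp add: algebra_simps)
  moreover have "0 \<le> p * (w - u * v)" "0 \<le> p * (1 - p) * ((1 - u) * (1 - v))"
    using assms corr by (auto simp: u_def v_def w_def)
  ultimately show ?thesis unfolding D u_def[symmetric] v_def[symmetric] w_def[symmetric] by simp
qed

lemma map_pmf_two_stage_statistics:
  assumes "finite X"
  shows "map_pmf (\<lambda>(S, g). (\<Union>e\<in>S. g e, \<lambda>a. card {e\<in>S. a \<in> g e}))
           (rand_subset X p \<bind> (\<lambda>S. Pi_pmf S {} R \<bind> (\<lambda>g. return_pmf (S, g))))
       = map_pmf (\<lambda>H. (\<Union>e\<in>X. H e, \<lambda>a. card {e\<in>X. a \<in> H e}))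
           (Pi_pmf X {} (\<lambda>e. bernoulli_pmf (p e) \<bind> (\<lambda>b. if b then R e else return_pmf {})))"
proof -
  define stat where "stat S g = (\<Union>e\<in>S. g e, \<lambda>a. card {e\<in>S. a \<in> g e})"
    for S :: "'a set" and g :: "'a \<Rightarrow> 'b set"
  define B where "B e = bernoulli_pmf (p e)" for e
  have stat_restrict: "map_pmf (stat {x\<in>X. f x}) (Pi_pmf {x\<in>X. f x} {} R) = map_pmf (stat X) (Pi_pmf {x\<in>X. f x} {} R)"
    for f
  proof (rule map_pmf_cong[OF refl])
    fix g assume "g \<in> set_pmf (Pi_pmf {x\<in>X. f x} {} R)"
    then have "g e = {}" if "e \<notin> {x\<in>X. f x}" for e
      using set_Pi_pmf_subset[of "{x\<in>X. f x}" "{}" R] assms that by auto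
    then have "(\<Union>e\<in>{x\<in>X. f x}. g e) = (\<Union>e\<in>X. g e)" "{e\<in>{x\<in>X. f x}. a \<in> g e} = {e\<in>X. a \<in> g e}" for a
      by auto
    then show "stat {x\<in>X. f x} g = stat X g" unfolding stat_def by simp
  qed
  have "map_pmf (\<lambda>(S, g). stat S g) (rand_subset X p \<bind> (\<lambda>S. Pi_pmf S {} R \<bind> (\<lambda>g. return_pmf (S, g))))
      = Pi_pmf X False B \<bind> (\<lambda>f. map_pmf (stat {x\<in>X. f x}) (Pi_pmf {x\<in>X. f x} {} R))"
    unfolding rand_subset_def B_def by (simp add: map_pmf_def bind_assoc_pmf bind_return_pmf)
  also have "\<dots> = Pi_pmf X False B \<bind> (\<lambda>f. map_pmf (stat X) (Pi_pmf X {} (\<lambda>e. if f e then R e else return_pmf {})))"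
    using assms by (simp add: stat_restrict Pi_pmf_if_set)
  also have "\<dots> = map_pmf (stat X) (Pi_pmf X {} (\<lambda>e. B e \<bind> (\<lambda>b. if b then R e else return_pmf {})))"
    using assms by (simp add: map_bind_pmf Pi_pmf_bind[where d' = False])
  finally show ?thesis unfolding stat_def B_def case_prod_unfold .
qed

section \<open>The layered graph and the fractional solutions\<close>

lemma finite_edges: "finite (edges m k)"
proof -
  define V where "V = insert Src ((\<lambda>(i, S). Lay i S) ` ({1, 2, 3} \<times> Pow {..<m}))"
  have "edges m k \<subseteq> V \<times> V" unfolding edges_def V_def by auto
  moreover have "finite V" unfolding V_def by simp
  ultimately show ?thesis by (simp add: finite_subset)
qed

lemma edge_cases:
  assumes "e \<in> edges m k"
  obtains (layer1) S where "e = (Src, Lay 1 S)" "S \<subseteq> {..<m}" "card S = k"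
    | (layer2) S T where "e = (Lay 1 S, Lay 2 T)" "S \<subseteq> T" "card S = k" "T \<subseteq> {..<m}" "card T = 2 * k"
    | (layer3) S T where "e = (Lay 2 T, Lay 3 S)" "S \<subseteq> T" "card S = k" "T \<subseteq> {..<m}" "card T = 2 * k"
  using assms unfolding edges_def by blast

lemma edges_vlayer: "(a, b) \<in> edges m k \<Longrightarrow> vlayer b = Suc (vlayer a)"
  by (erule edge_cases) auto

lemma rtrancl_edges_cases:
  assumes "(a, b) \<in> (edges m k)\<^sup>*"
  shows "a = b \<or> (vlayer a < vlayer b \<and> (vlayer b = Suc (vlayer a) \<longrightarrow> (a, b) \<in> edges m k))"
  using assms
proof (induction rule: rtrancl_induct)
  case (step c b)
  then show ?case using edges_vlayer[OF step.hyps(2)] by auto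
qed simp

lemma edge_tail_bounds:
  assumes "e \<in> edges m k"
  shows "vlayer (fst e) \<le> 2" "finite (vset (fst e))" "card (vset (fst e)) \<le> 2 * k"
  using assms by (cases rule: edge_cases; auto intro: finite_subset)+

lemma card_image_subsets_le:
  assumes "finite V" "card V \<le> 2 * k"
  shows "card (f ` {u. u \<subseteq> V \<and> card u = k}) \<le> (2 * k) choose k"
proof -
  have "card (f ` {u. u \<subseteq> V \<and> card u = k}) \<le> card {u. u \<subseteq> V \<and> card u = k}"
    using assms(1) by (intro card_image_le) simp
  also have "\<dots> = card V choose k" using n_subsets[OF assms(1)] by simp
  also have "\<dots> \<le> (2 * k) choose k" using assms(2) by (rule binomial_right_mono)
  finally show ?thesis .
qed

lemma layer1_ancestors_subset:
  assumes "e \<in> edges m k"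
  shows "{i \<in> edges m k. elayer i = 1 \<and> e \<in> Desc m k i}
       \<subseteq> (\<lambda>u. (Src, Lay 1 u)) ` {u. u \<subseteq> vset (fst e) \<and> card u = k}"
proof safe
  fix i assume i: "i \<in> edges m k" "elayer i = 1" "e \<in> Desc m k i"
  then obtain u where u: "i = (Src, Lay 1 u)" "card u = k"
    by (cases rule: edge_cases) (auto simp: elayer_def)
  have "(Lay 1 u, fst e) \<in> (edges m k)\<^sup>*" using i(3) u(1) by (simp add: Desc_def)
  from rtrancl_edges_cases[OF this] have "u \<subseteq> vset (fst e)"
    using edge_tail_bounds(1)[OF assms] by (cases "fst e") (auto simp: edges_def)
  with u show "i \<in> (\<lambda>u. (Src, Lay 1 u)) ` {u. u \<subseteq> vset (fst e) \<and> card u = k}" by blast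
qed

lemma layer2_ancestors_subset:
  assumes "e \<in> edges m k"
  shows "{i \<in> edges m k. elayer i = 2 \<and> e \<in> Desc m k i}
       \<subseteq> (\<lambda>u. (Lay 1 u, fst e)) ` {u. u \<subseteq> vset (fst e) \<and> card u = k}"
proof safe
  fix i assume i: "i \<in> edges m k" "elayer i = 2" "e \<in> Desc m k i"
  then obtain u w where u: "i = (Lay 1 u, Lay 2 w)" "u \<subseteq> w" "card u = k"
    by (cases rule: edge_cases) (auto simp: elayer_def)
  have "(Lay 2 w, fst e) \<in> (edges m k)\<^sup>*" using i(3) u(1) by (simp add: Desc_def)
  from rtrancl_edges_cases[OF this] have "fst e = Lay 2 w"
    using edge_tail_bounds(1)[OF assms] by auto
  with u show "i \<in> (\<lambda>u. (Lay 1 u, fst e)) ` {u. u \<subseteq> vset (fst e) \<and> card u = k}" by auto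
qed

lemma card_ancestors_le:
  assumes "e \<in> edges m k" "l \<in> {1, 2}"
  shows "card {i \<in> edges m k. elayer i = l \<and> e \<in> Desc m k i} \<le> (2 * k) choose k"
proof -
  note bound = card_image_subsets_le[OF edge_tail_bounds(2,3)[OF assms(1)]]
  show ?thesis
    using assms(2) card_mono[OF finite_imageI layer1_ancestors_subset[OF assms(1)]]
      card_mono[OF finite_imageI layer2_ancestors_subset[OF assms(1)]] bound[of "\<lambda>u. (Src, Lay 1 u)"]
      bound[of "\<lambda>u. (Lay 1 u, fst e)"] edge_tail_bounds(2)[OF assms(1)]
    by fastforce
qed

lemma Nb_ge_2:
  assumes "1 \<le> k" "2 * k < m"
  shows "2 \<le> Nb m k"
proof -
  have "2 \<le> Suc k choose k" using assms(1) by (simp add: binomial_Suc_n)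
  also have "\<dots> \<le> (m - k) choose k" using assms(2) by (intro binomial_right_mono) simp
  finally show ?thesis unfolding Nb_def by simp
qed

lemma xval_bounds:
  assumes "1 \<le> k" "2 * k < m"
  shows "0 \<le> xval m k i" "xval m k i \<le> 1/2"
proof -
  have N: "2 \<le> Nb m k" using Nb_ge_2[OF assms] .
  moreover have "1 \<le> real ((2 * k) choose k)" by (simp add: Suc_le_eq)
  ultimately have "2 \<le> Nb m k * real ((2 * k) choose k)"
    using mult_mono[of 2 "Nb m k" 1 "real ((2 * k) choose k)"] by simp
  with N show "0 \<le> xval m k i" "xval m k i \<le> 1/2"
    unfolding xval_def by (auto simp: field_simps)
qed

lemma divide_binomial_le:
  fixes x :: real
  assumes "0 \<le> x" "c \<le> n"
  shows "x / real (n choose c) \<le> x"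
proof -
  have "1 \<le> real (n choose c)" using assms(2) by (simp add: Suc_le_eq)
  then show ?thesis using assms(1) by (simp add: divide_le_eq mult_le_cancel_left1)
qed

lemma Nb_le_binomial: "Nb m k \<le> real (m choose k)"
  unfolding Nb_def by (simp add: binomial_right_mono)

lemma xsub_bounds: "0 \<le> xsub m k i e" "xsub m k i e \<le> 1"
proof -
  have "Nb m k / real (m choose k) \<le> 1"
    using Nb_le_binomial by (auto simp: divide_le_eq_1)
  moreover have "0 \<le> Nb m k" by (simp add: Nb_def)
  ultimately have "Nb m k / real (m choose k) / real ((m - 2 * k + c) choose c) \<le> 1" for c
    using divide_binomial_le[of "Nb m k / real (m choose k)" c "m - 2 * k + c"] by simp
  moreover have "1 / real ((2 * k) choose k) \<le> 1" using divide_binomial_le[of 1 k "2 * k"] by simp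
  ultimately show "0 \<le> xsub m k i e" "xsub m k i e \<le> 1"
    unfolding xsub_def using \<open>0 \<le> Nb m k\<close> by (auto simp del: divide_divide_eq_left)
qed

lemma xsub_eq_0:
  assumes "i \<noteq> e" "\<not> (elayer i \<in> {1, 2} \<and> e \<in> Desc m k i)"
  shows "xsub m k i e = 0"
  using assms by (auto simp: xsub_def)

lemma xval_mult_xsub_layer1_le:
  assumes "1 \<le> k" "2 * k < m" "elayer i = 1" "i \<noteq> e"
  shows "xval m k i * xsub m k i e \<le> 1 / real ((2 * k) choose k)"
proof -
  define C where "C = real ((2 * k) choose k)"
  have N: "2 \<le> Nb m k" by (rule Nb_ge_2[OF assms(1,2)])
  have C: "1 \<le> C" unfolding C_def by (simp add: Suc_le_eq)
  have xval: "xval m k i = 1 / Nb m k" using assms(3) by (simp add: xval_def)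
  show ?thesis
  proof (cases "elayer e = 3")
    case True
    have "xsub m k i e \<le> Nb m k / real (m choose k)"
      using assms(3,4) True divide_binomial_le[of "Nb m k / real (m choose k)"]
      by (simp add: xsub_def Nb_def del: divide_divide_eq_left)
    then have "xval m k i * xsub m k i e \<le> 1 / Nb m k * (Nb m k / real (m choose k))"
      unfolding xval using N by (intro mult_left_mono) auto
    also have "\<dots> \<le> 1 / C"
      using N C assms(2) by (simp add: frac_le C_def binomial_right_mono)
    finally show ?thesis unfolding C_def .
  next
    case False
    then have "xval m k i * xsub m k i e \<le> 1 / Nb m k * (1 / C)"
      using assms(3,4) N by (simp add: xsub_def xval C_def mult.commute)
    also have "\<dots> \<le> 1 / C" using N C by (simp add: divide_le_eq)
    finally show ?thesis unfolding C_def .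
  qed
qed

lemma xval_mult_xsub_layer2_le:
  assumes "1 \<le> k" "2 * k < m" "elayer i = 2"
  shows "xval m k i * xsub m k i e \<le> 1 / (2 * real ((2 * k) choose k))"
proof -
  define C where "C = real ((2 * k) choose k)"
  have N: "2 \<le> Nb m k" by (rule Nb_ge_2[OF assms(1,2)])
  have C: "1 \<le> C" unfolding C_def by (simp add: Suc_le_eq)
  have "xval m k i * xsub m k i e \<le> 1 / (Nb m k * C)"
    using assms(3) xsub_bounds(2)[of m k i e] N C by (simp add: xval_def C_def divide_right_mono)
  also have "\<dots> \<le> 1 / (2 * C)" using N C by (intro divide_left_mono mult_right_mono) auto
  finally show ?thesis unfolding C_def .
qed

lemma xval_mult_xsub_le:
  assumes "1 \<le> k" "2 * k < m"
  shows "xval m k i * xsub m k i e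
     \<le> (if i = e then 1/2 else 0)
       + (if elayer i = 1 \<and> e \<in> Desc m k i then 1 / real ((2 * k) choose k) else 0)
       + (if elayer i = 2 \<and> e \<in> Desc m k i then 1 / (2 * real ((2 * k) choose k)) else 0)"
proof -
  consider (self) "i = e" | (layer1) "i \<noteq> e" "elayer i = 1" "e \<in> Desc m k i"
    | (layer2) "i \<noteq> e" "elayer i = 2" "e \<in> Desc m k i" | (other) "xsub m k i e = 0"
    using xsub_eq_0[of i e m k] by blast
  then show ?thesis
  proof cases
    case self
    then show ?thesis using xval_bounds[OF assms, of i] by (simp add: xsub_def add_increasing2)
  next
    case layer1
    then show ?thesis using xval_mult_xsub_layer1_le[OF assms, of i e] by simp
  next
    case layer2
    then show ?thesis using xval_mult_xsub_layer2_le[OF assms, of i e] by simp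
  qed (simp add: add_nonneg_nonneg)
qed

lemma sum_xval_mult_xsub_le_2:
  assumes "1 \<le> k" "2 * k < m" "e \<in> edges m k"
  shows "(\<Sum>i\<in>edges m k. xval m k i * xsub m k i e) \<le> 2"
proof -
  define C where "C = real ((2 * k) choose k)"
  define A where "A l = {i \<in> edges m k. elayer i = l \<and> e \<in> Desc m k i}" for l
  have C: "1 \<le> C" unfolding C_def by (simp add: Suc_le_eq)
  have "(\<Sum>i\<in>edges m k. xval m k i * xsub m k i e)
      \<le> (\<Sum>i\<in>edges m k. (if i = e then 1/2 else 0)
             + (if elayer i = 1 \<and> e \<in> Desc m k i then 1 / C else 0)
             + (if elayer i = 2 \<and> e \<in> Desc m k i then 1 / (2 * C) else 0))"
    unfolding C_def by (intro sum_mono xval_mult_xsub_le[OF assms(1,2)])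
  also have "\<dots> = 1/2 + real (card (A 1)) / C + real (card (A 2)) / (2 * C)"
    using assms(3) finite_edges unfolding A_def by (simp add: sum.distrib flip: sum.inter_filter)
  also have "\<dots> \<le> 1/2 + 1 + 1/2"
  proof -
    have "real (card (A l)) \<le> C" if "l \<in> {1, 2}" for l
      using card_ancestors_le[OF assms(3) that] unfolding A_def C_def by linarith
    then have "real (card (A 1)) / C \<le> 1" "real (card (A 2)) / (2 * C) \<le> 1/2"
      using C by (simp_all add: divide_le_eq)
    then show ?thesis by linarith
  qed
  finally show ?thesis by simp
qed

section \<open>The shadow distribution\<close>

(* H_e of the proof idea: S_e if e is in S, and {} otherwise. *)
definition edge_shadow :: "nat \<Rightarrow> nat \<Rightarrow> edge \<Rightarrow> edge set pmf" where
  "edge_shadow m k e =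
     bernoulli_pmf (xval m k e) \<bind> (\<lambda>b. if b then rand_subset (edges m k) (xsub m k e) else return_pmf {})"

lemma map_pmf_shadow_statistics:
  "map_pmf (\<lambda>\<omega>. (setA \<omega>, multA' \<omega>)) (shadow m k)
   = map_pmf (\<lambda>H. (\<Union>e\<in>edges m k. H e, \<lambda>a. card {e\<in>edges m k. a \<in> H e}))
       (Pi_pmf (edges m k) {} (edge_shadow m k))"
  using map_pmf_two_stage_statistics[OF finite_edges]
  unfolding shadow_def edge_shadow_def setA_def multA'_def case_prod_unfold .

context
  fixes m k :: nat
  assumes k_pos: "1 \<le> k" and k_small: "2 * k < m"
begin

lemma xval_le_1: "xval m k i \<le> 1"
  using xval_bounds(2)[OF k_pos k_small, of i] by simp

lemma prob_edge_shadow_mem: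
  assumes "e \<in> edges m k"
  shows "measure_pmf.prob (edge_shadow m k i) {T. e \<in> T} = xval m k i * xsub m k i e"
  using prob_bernoulli_bind[OF xval_bounds(1)[OF k_pos k_small] xval_le_1,
      where K = "\<lambda>b. if b then rand_subset (edges m k) (xsub m k i) else return_pmf {}" and A = "{T. e \<in> T}"]
    prob_rand_subset_mem[OF finite_edges assms, of "xsub m k i"] xsub_bounds[of m k i e]
  unfolding edge_shadow_def by simp

lemma prob_edge_shadow_mem_le_half:
  assumes "e \<in> edges m k"
  shows "measure_pmf.prob (edge_shadow m k i) {T. e \<in> T} \<le> 1/2"
proof -
  have "xval m k i * xsub m k i e \<le> xval m k i"
    using xval_bounds(1)[OF k_pos k_small] xsub_bounds(2) by (rule mult_left_le[rotated])
  then show ?thesis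
    using prob_edge_shadow_mem[OF assms] xval_bounds(2)[OF k_pos k_small, of i] by simp
qed

lemma sum_prob_edge_shadow_mem_le_2:
  assumes "e \<in> edges m k"
  shows "(\<Sum>i\<in>edges m k. measure_pmf.prob (edge_shadow m k i) {T. e \<in> T}) \<le> 2"
  using sum_xval_mult_xsub_le_2[OF k_pos k_small assms] by (simp add: prob_edge_shadow_mem[OF assms])

lemma edge_shadow_not_mem_mult_le:
  assumes "e \<in> edges m k" "e' \<in> edges m k"
  shows "measure_pmf.prob (edge_shadow m k i) {T. e \<notin> T} * measure_pmf.prob (edge_shadow m k i) {T. e' \<notin> T}
       \<le> measure_pmf.prob (edge_shadow m k i) {T. e \<notin> T \<and> e' \<notin> T}"
  unfolding edge_shadow_def
  using xval_bounds(1)[OF k_pos k_small] xval_le_1 xsub_bounds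
  by (intro thinned_not_mem_mult_le prob_rand_subset_not_mem_mult_le[OF finite_edges assms]) auto

lemma shadow_expectation_multiplicity_le:
  assumes "e1 \<in> edges m k" "measure_pmf.prob (shadow m k) {\<omega>. (e1 \<in> setA \<omega>) = b} \<noteq> 0"
  shows "measure_pmf.expectation (cond_pmf (shadow m k) {\<omega>. (e1 \<in> setA \<omega>) = b})
           (\<lambda>\<omega>. \<Sum>e\<in>outE m k v. real (multA' \<omega> e))
       \<le> 6 * measure_pmf.expectation (cond_pmf (shadow m k) {\<omega>. (e1 \<in> setA \<omega>) = b})
           (\<lambda>\<omega>. real (card (outE m k v \<inter> setA \<omega>)))"
proof -
  interpret independent_random_sets "edges m k" "edge_shadow m k"
    by unfold_locales (rule finite_edges)
  define Y where "Y = outE m k v"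
  have Y: "finite Y" "Y \<subseteq> edges m k" unfolding Y_def outE_def using finite_edges by auto
  define A where "A = {z :: edge set \<times> (edge \<Rightarrow> nat). (e1 \<in> fst z) = b}"
  note transfer = expectation_cond_pmf_map_pmf_eq[OF map_pmf_shadow_statistics, where A = A]
  have event: "{\<omega>. (e1 \<in> setA \<omega>) = b} = (\<lambda>\<omega>. (setA \<omega>, multA' \<omega>)) -` A" unfolding A_def by auto
  have pos: "measure_pmf.prob family {H. (e1 \<in> (\<Union>j\<in>edges m k. H j)) = b} \<noteq> 0"
    using transfer(1) assms(2) unfolding event by (simp add: A_def vimage_def)
  have "measure_pmf.expectation (cond_pmf family {H. (e1 \<in> (\<Union>j\<in>edges m k. H j)) = b})
           (\<lambda>H. \<Sum>e\<in>Y. real (card {i\<in>edges m k. e \<in> H i}))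
       \<le> (2 + 2 * 2) * measure_pmf.expectation (cond_pmf family {H. (e1 \<in> (\<Union>j\<in>edges m k. H j)) = b})
           (\<lambda>H. real (card (Y \<inter> (\<Union>j\<in>edges m k. H j))))"
    using Y prob_edge_shadow_mem_le_half[OF assms(1)] sum_prob_edge_shadow_mem_le_2
      edge_shadow_not_mem_mult_le[OF _ assms(1)]
    by (intro expectation_multiplicity_le[OF Y(1) _ _ _ pos]) auto
  then show ?thesis
    using transfer(2)[OF assms(2)[unfolded event], of "\<lambda>z. \<Sum>e\<in>Y. real (snd z e)"]
      transfer(2)[OF assms(2)[unfolded event], of "\<lambda>z. real (card (Y \<inter> fst z))"]
    unfolding event Y_def[symmetric] by (simp add: A_def vimage_def)
qed

end

theorem lemma6:
  "\<exists>\<rho>0::real. \<rho>0 > 0 \<and>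
    (\<forall>\<rho>::real. 0 < \<rho> \<and> \<rho> < \<rho>0 \<longrightarrow>
      (\<exists>c::real. c > 0 \<and> (\<exists>M::nat. \<forall>m k e1 v b.
         m \<ge> M \<and> real k = \<rho> * real m \<and> e1 \<in> edges m k \<and> v \<in> verts m k \<and>
         measure_pmf.prob (shadow m k) {\<omega>. (e1 \<in> setA \<omega>) = b} > 0 \<longrightarrow>
         measure_pmf.expectation (cond_pmf (shadow m k) {\<omega>. (e1 \<in> setA \<omega>) = b})
             (\<lambda>\<omega>. real (card (outE m k v \<inter> setA \<omega>)))
         \<ge> c / real m ^ 4 *
           measure_pmf.expectation (cond_pmf (shadow m k) {\<omega>. (e1 \<in> setA \<omega>) = b})
             (\<lambda>\<omega>. \<Sum>e\<in>outE m k v. real (multA' \<omega> e)))))"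
proof (rule exI[of _ "1/2"], intro conjI allI impI exI[of _ "1/6::real"] exI[of _ "1::nat"])
  fix \<rho> :: real and m k e1 v b
  assume \<rho>: "0 < \<rho> \<and> \<rho> < 1/2"
    and H: "1 \<le> m \<and> real k = \<rho> * real m \<and> e1 \<in> edges m k \<and> v \<in> verts m k \<and>
            measure_pmf.prob (shadow m k) {\<omega>. (e1 \<in> setA \<omega>) = b} > 0"
  define E where "E = cond_pmf (shadow m k) {\<omega>. (e1 \<in> setA \<omega>) = b}"
  define EA where "EA = measure_pmf.expectation E (\<lambda>\<omega>. real (card (outE m k v \<inter> setA \<omega>)))"
  define EA' where "EA' = measure_pmf.expectation E (\<lambda>\<omega>. \<Sum>e\<in>outE m k v. real (multA' \<omega> e))"
  have "0 < real k" "real (2 * k) < real m" using \<rho> H by auto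
  then have "1 \<le> k" "2 * k < m" by linarith+
  then have "EA' \<le> 6 * EA"
    using H shadow_expectation_multiplicity_le unfolding E_def EA_def EA'_def by auto
  moreover have "1/6 / real m ^ 4 * EA' \<le> 1/6 * EA'"
    using H by (intro mult_right_mono) (auto simp: EA'_def sum_nonneg divide_le_eq)
  ultimately show "1/6 / real m ^ 4 * EA' \<le> EA"
    by linarith
qed simp_all

end
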